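(* Let $A$ be a finite-dimensional algebra over a field $K$ with the property that if $A$ satisfies the Auslander condition then $A$ is Iwanaga–Gorenstein. If $A$ has infinite dominant dimension, then $A$ is selfinjective.
   Context: Modules are finitely generated right modules. Let $0\to A\to I^0\to I^1\to\cdots$ be a minimal injective coresolution of $A_A$. For $n\ge 1$, $A$ is $n$-Gorenstein if $\operatorname{pd} I^i\le i$ for all $0\le i<n$; $A$ satisfies the Auslander condition if it is $n$-Gorenstein for all $n\ge 1$. $A$ is Iwanaga–Gorenstein if $\operatorname{id} A_A=\operatorname{id}{}_AA<\infty$. The dominant dimension of $A$ is the smallest $n$ such that $I^n$ is not projective (and $\infty$ if all $I^n$ are projective). *)

theory Defs
  imports "Jordan_Normal_Form.Matrix" "HOL-Library.Extended_Nat"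
begin

text \<open>A finite-dimensional K-algebra is represented (up to isomorphism, via the regular
representation) as a unital K-subalgebra of the D x D matrices: the pair (D, A).\<close>
type_synonym 'k alg = "nat \<times> 'k mat set"

definition fd_algebra :: "('k::field) alg \<Rightarrow> bool" where
  "fd_algebra Alg \<longleftrightarrow> (let D = fst Alg; A = snd Alg in
     A \<subseteq> carrier_mat D D \<and> 1\<^sub>m D \<in> A \<and> 0\<^sub>m D D \<in> A \<and>
     (\<forall>a\<in>A. \<forall>b\<in>A. a + b \<in> A \<and> a * b \<in> A) \<and>
     (\<forall>c a. a \<in> A \<longrightarrow> c \<cdot>\<^sub>m a \<in> A))"

text \<open>A finitely generated (= finite-dimensional) module is K^m (column vectors) with
an action a \<mapsto> \<rho> a.  Flag l = True: left module (a.v = \<rho> a v, \<rho> multiplicative);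
l = False: right module (v.a = \<rho> a v, \<rho> anti-multiplicative).\<close>
type_synonym 'k amod = "nat \<times> ('k mat \<Rightarrow> 'k mat)"

definition is_mod :: "('k::field) alg \<Rightarrow> bool \<Rightarrow> 'k amod \<Rightarrow> bool" where
  "is_mod Alg l M \<longleftrightarrow> (let D = fst Alg; A = snd Alg; m = fst M; \<rho> = snd M in
     (\<forall>a\<in>A. \<rho> a \<in> carrier_mat m m) \<and> \<rho> (1\<^sub>m D) = 1\<^sub>m m \<and>
     (\<forall>a\<in>A. \<forall>b\<in>A. \<rho> (a + b) = \<rho> a + \<rho> b) \<and>
     (\<forall>c. \<forall>a\<in>A. \<rho> (c \<cdot>\<^sub>m a) = c \<cdot>\<^sub>m \<rho> a) \<and>
     (\<forall>a\<in>A. \<forall>b\<in>A. \<rho> (a * b) = (if l then \<rho> a * \<rho> b else \<rho> b * \<rho> a)))"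

definition is_hom :: "('k::field) alg \<Rightarrow> 'k amod \<Rightarrow> 'k amod \<Rightarrow> 'k mat \<Rightarrow> bool" where
  "is_hom Alg M N F \<longleftrightarrow> F \<in> carrier_mat (fst N) (fst M) \<and>
     (\<forall>a\<in>snd Alg. F * snd M a = snd N a * F)"

definition ker :: "('k::field) mat \<Rightarrow> nat \<Rightarrow> 'k vec set" where
  "ker F n = {v \<in> carrier_vec n. F *\<^sub>v v = 0\<^sub>v (dim_row F)}"

definition img :: "('k::field) mat \<Rightarrow> nat \<Rightarrow> 'k vec set" where
  "img F n = (\<lambda>v. F *\<^sub>v v) ` carrier_vec n"

definition injective_mod :: "('k::field) alg \<Rightarrow> bool \<Rightarrow> 'k amod \<Rightarrow> bool" where
  "injective_mod Alg l I \<longleftrightarrow> is_mod Alg l I \<and>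
     (\<forall>M N f g. is_mod Alg l M \<and> is_mod Alg l N \<and> is_hom Alg M N f \<and>
        inj_on (\<lambda>v. f *\<^sub>v v) (carrier_vec (fst M)) \<and> is_hom Alg M I g
        \<longrightarrow> (\<exists>h. is_hom Alg N I h \<and> h * f = g))"

definition projective_mod :: "('k::field) alg \<Rightarrow> bool \<Rightarrow> 'k amod \<Rightarrow> bool" where
  "projective_mod Alg l P \<longleftrightarrow> is_mod Alg l P \<and>
     (\<forall>M N g f. is_mod Alg l M \<and> is_mod Alg l N \<and> is_hom Alg M N g \<and>
        img g (fst M) = carrier_vec (fst N) \<and> is_hom Alg P N f
        \<longrightarrow> (\<exists>h. is_hom Alg P M h \<and> g * h = f))"

text \<open>M is (isomorphic to) the regular module A_A (l = False) resp. _AA (l = True):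
  there is v with a \<mapsto> a-action on v a bijection A \<rightarrow> M.\<close>
definition regular_mod :: "('k::field) alg \<Rightarrow> bool \<Rightarrow> 'k amod \<Rightarrow> bool" where
  "regular_mod Alg l M \<longleftrightarrow> is_mod Alg l M \<and>
     (\<exists>v\<in>carrier_vec (fst M). bij_betw (\<lambda>a. snd M a *\<^sub>v v) (snd Alg) (carrier_vec (fst M)))"

definition submod :: "('k::field) alg \<Rightarrow> 'k amod \<Rightarrow> 'k vec set \<Rightarrow> bool" where
  "submod Alg M U \<longleftrightarrow> U \<subseteq> carrier_vec (fst M) \<and> 0\<^sub>v (fst M) \<in> U \<and>
     (\<forall>u\<in>U. \<forall>w\<in>U. u + w \<in> U) \<and> (\<forall>c. \<forall>u\<in>U. c \<cdot>\<^sub>v u \<in> U) \<and>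
     (\<forall>a\<in>snd Alg. \<forall>u\<in>U. snd M a *\<^sub>v u \<in> U)"

definition essential :: "('k::field) alg \<Rightarrow> 'k amod \<Rightarrow> 'k vec set \<Rightarrow> bool" where
  "essential Alg M U \<longleftrightarrow> submod Alg M U \<and>
     (\<forall>V. submod Alg M V \<and> V \<noteq> {0\<^sub>v (fst M)} \<longrightarrow> U \<inter> V \<noteq> {0\<^sub>v (fst M)})"

text \<open>Injective coresolution 0 \<rightarrow> M \<rightarrow>(\<epsilon>) I 0 \<rightarrow>(d 0) I 1 \<rightarrow>(d 1) ...\<close>
definition inj_coresolution ::
  "('k::field) alg \<Rightarrow> bool \<Rightarrow> 'k amod \<Rightarrow> (nat \<Rightarrow> 'k amod) \<Rightarrow> (nat \<Rightarrow> 'k mat) \<Rightarrow> 'k mat \<Rightarrow> bool" where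
  "inj_coresolution Alg l M I d \<epsilon> \<longleftrightarrow> is_mod Alg l M \<and>
     (\<forall>i. injective_mod Alg l (I i)) \<and>
     is_hom Alg M (I 0) \<epsilon> \<and> (\<forall>i. is_hom Alg (I i) (I (Suc i)) (d i)) \<and>
     ker \<epsilon> (fst M) = {0\<^sub>v (fst M)} \<and>
     img \<epsilon> (fst M) = ker (d 0) (fst (I 0)) \<and>
     (\<forall>i. img (d i) (fst (I i)) = ker (d (Suc i)) (fst (I (Suc i))))"

text \<open>Minimal: each I i is an injective envelope of the i-th cosyzygy, i.e.
  ker (d i) = image of the previous map is essential in I i.\<close>
definition min_inj_coresolution ::
  "('k::field) alg \<Rightarrow> bool \<Rightarrow> 'k amod \<Rightarrow> (nat \<Rightarrow> 'k amod) \<Rightarrow> (nat \<Rightarrow> 'k mat) \<Rightarrow> 'k mat \<Rightarrow> bool" where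
  "min_inj_coresolution Alg l M I d \<epsilon> \<longleftrightarrow> inj_coresolution Alg l M I d \<epsilon> \<and>
     (\<forall>i. essential Alg (I i) (ker (d i) (fst (I i))))"

text \<open>Projective resolution ... \<rightarrow> P 1 \<rightarrow>(dd 0) P 0 \<rightarrow>(pp) M \<rightarrow> 0.\<close>
definition proj_resolution ::
  "('k::field) alg \<Rightarrow> bool \<Rightarrow> 'k amod \<Rightarrow> (nat \<Rightarrow> 'k amod) \<Rightarrow> (nat \<Rightarrow> 'k mat) \<Rightarrow> 'k mat \<Rightarrow> bool" where
  "proj_resolution Alg l M P dd pp \<longleftrightarrow> is_mod Alg l M \<and>
     (\<forall>i. projective_mod Alg l (P i)) \<and>
     is_hom Alg (P 0) M pp \<and> (\<forall>i. is_hom Alg (P (Suc i)) (P i) (dd i)) \<and>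
     img pp (fst (P 0)) = carrier_vec (fst M) \<and>
     img (dd 0) (fst (P 1)) = ker pp (fst (P 0)) \<and>
     (\<forall>i. img (dd (Suc i)) (fst (P (Suc (Suc i)))) = ker (dd i) (fst (P (Suc i))))"

definition proj_dim :: "('k::field) alg \<Rightarrow> bool \<Rightarrow> 'k amod \<Rightarrow> enat" where
  "proj_dim Alg l M = Inf (enat ` {n. \<exists>P dd pp. proj_resolution Alg l M P dd pp \<and>
                                          (\<forall>i>n. fst (P i) = 0)})"

definition inj_dim :: "('k::field) alg \<Rightarrow> bool \<Rightarrow> 'k amod \<Rightarrow> enat" where
  "inj_dim Alg l M = Inf (enat ` {n. \<exists>I d \<epsilon>. inj_coresolution Alg l M I d \<epsilon> \<and>
                                          (\<forall>i>n. fst (I i) = 0)})"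

text \<open>Notions relative to the (fixed) minimal injective coresolution I of A_A.\<close>
definition n_gorenstein :: "('k::field) alg \<Rightarrow> (nat \<Rightarrow> 'k amod) \<Rightarrow> nat \<Rightarrow> bool" where
  "n_gorenstein Alg I n \<longleftrightarrow> (\<forall>i<n. proj_dim Alg False (I i) \<le> enat i)"

definition auslander_condition :: "('k::field) alg \<Rightarrow> (nat \<Rightarrow> 'k amod) \<Rightarrow> bool" where
  "auslander_condition Alg I \<longleftrightarrow> (\<forall>n\<ge>1. n_gorenstein Alg I n)"

definition dominant_dim :: "('k::field) alg \<Rightarrow> (nat \<Rightarrow> 'k amod) \<Rightarrow> enat" where
  "dominant_dim Alg I = Inf (enat ` {n. \<not> projective_mod Alg False (I n)})"

definition iwanaga_gorenstein :: "('k::field) alg \<Rightarrow> bool" where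
  "iwanaga_gorenstein Alg \<longleftrightarrow> (\<exists>R L. regular_mod Alg False R \<and> regular_mod Alg True L \<and>
     inj_dim Alg False R = inj_dim Alg True L \<and> inj_dim Alg False R < \<infinity>)"

definition selfinjective :: "('k::field) alg \<Rightarrow> bool" where
  "selfinjective Alg \<longleftrightarrow> (\<exists>R. regular_mod Alg False R \<and> injective_mod Alg False R)"

end

theory Submission
  imports Defs "Jordan_Normal_Form.Determinant"
begin

text \<open>Infinite dominant dimension makes every term \<open>I\<^sup>k\<close> of the minimal injective
coresolution of \<open>A\<^sub>A\<close> projective, so the Auslander condition holds trivially and \<open>A\<close> is
Iwanaga-Gorenstein: \<open>A\<^sub>A\<close> has some injective coresolution \<open>J\<close> of finite length \<open>n\<close>.
Lifting mutually inverse maps between the two copies of \<open>A\<^sub>A\<close> to chain maps gives an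
endomorphism of the minimal coresolution that lifts the identity; by essentiality it is injective
in every degree, and in degree \<open>n + 1\<close> it factors through \<open>J\<^sup>n\<^sup>+\<^sup>1 = 0\<close>, so
\<open>I\<^sup>n\<^sup>+\<^sup>1 = 0\<close>. Descending: if \<open>I\<^sup>k\<^sup>+\<^sup>2 = 0\<close> then \<open>d\<^sup>k\<close> maps onto the projective
module \<open>I\<^sup>k\<^sup>+\<^sup>1\<close> and splits, and the image of the splitting meets the essential submodule
\<open>ker d\<^sup>k\<close> trivially, so \<open>I\<^sup>k\<^sup>+\<^sup>1 = 0\<close>. Finally \<open>I\<^sup>1 = 0\<close> makes \<open>A\<^sub>A \<cong> I\<^sup>0\<close> injective.\<close>

section \<open>Matrices as linear maps\<close>

lemma mult_mat_vec_unit_vec: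
  "(A :: 'a::field mat) \<in> carrier_mat n m \<Longrightarrow> j < m \<Longrightarrow> A *\<^sub>v unit_vec m j = col A j"
  by (intro eq_vecI) auto

lemma eq_mat_on_vecI:
  fixes A B :: "'a::field mat"
  assumes A: "A \<in> carrier_mat n m" and B: "B \<in> carrier_mat n m"
    and eq: "\<And>x. x \<in> carrier_vec m \<Longrightarrow> A *\<^sub>v x = B *\<^sub>v x"
  shows "A = B"
proof (rule mat_col_eqI)
  fix j assume "j < dim_col B"
  then have j: "j < m" using B by auto
  show "col A j = col B j"
    using eq[of "unit_vec m j"] mult_mat_vec_unit_vec[OF A j] mult_mat_vec_unit_vec[OF B j] by simp
qed (use A B in auto)

lemma smult_mat_mult_vec:
  fixes A :: "'a::field mat"
  assumes "A \<in> carrier_mat n m" and "v \<in> carrier_vec m"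
  shows "(c \<cdot>\<^sub>m A) *\<^sub>v v = c \<cdot>\<^sub>v (A *\<^sub>v v)"
  using assms by (intro eq_vecI) (auto simp: scalar_prod_def sum_distrib_left mult.assoc row_def)

lemma eq_vec_of_minus_zero:
  fixes x y :: "'a::field vec"
  assumes x: "x \<in> carrier_vec n" and y: "y \<in> carrier_vec n" and xy: "x - y = 0\<^sub>v n"
  shows "x = y"
proof (rule eq_vecI)
  fix i assume "i < dim_vec y"
  then have "i < n" using y by auto
  then show "x $ i = y $ i" using arg_cong[OF xy, of "\<lambda>v. v $ i"] x y by simp
qed (use x y in auto)

lemma carrier_vec_trivial_imp_zero:
  assumes "\<forall>y \<in> carrier_vec n. y = (0\<^sub>v n :: 'a::field vec)"
  shows "n = 0"
proof (rule ccontr)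
  assume "n \<noteq> 0"
  then have "unit_vec n 0 \<noteq> (0\<^sub>v n :: 'a vec)" by simp
  then show False using assms unit_vec_carrier[of n 0] by blast
qed

lemma col_in_img: "A \<in> carrier_mat n m \<Longrightarrow> j < m \<Longrightarrow> col A j \<in> img A m"
  unfolding img_def by (metis image_eqI mult_mat_vec_unit_vec unit_vec_carrier)

lemma mat_factor_through_img:
  fixes A B :: "'a::field mat"
  assumes A: "A \<in> carrier_mat n m" and B: "B \<in> carrier_mat n c"
    and sub: "img A m \<subseteq> img B c"
  shows "\<exists>G \<in> carrier_mat c m. B * G = A"
proof -
  have "\<forall>j \<in> {..<m}. \<exists>x. x \<in> carrier_vec c \<and> B *\<^sub>v x = col A j"
  proof
    fix j assume "j \<in> {..<m}"
    then have "col A j \<in> img B c" using subsetD[OF sub col_in_img[OF A]] by simp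
    then show "\<exists>x. x \<in> carrier_vec c \<and> B *\<^sub>v x = col A j" unfolding img_def by auto
  qed
  from bchoice[OF this] obtain pre
    where pre: "\<And>j. j < m \<Longrightarrow> pre j \<in> carrier_vec c \<and> B *\<^sub>v pre j = col A j" by auto
  define G where "G = mat c m (\<lambda>(i, j). pre j $ i)"
  have G: "G \<in> carrier_mat c m" unfolding G_def by simp
  have "B * G = A"
  proof (rule mat_col_eqI)
    fix j assume "j < dim_col A"
    then have j: "j < m" using A by simp
    have "col G j = pre j" unfolding G_def using j pre[OF j] by (intro eq_vecI) auto
    then show "col (B * G) j = col A j" using col_mult2[OF B G j] pre[OF j] by simp
  qed (use A B G in auto)
  then show ?thesis using G by blast
qed

lemma ker_trivial_mult_vec_cancel:
  fixes B :: "'a::field mat"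
  assumes B: "B \<in> carrier_mat n c" and inj: "ker B c = {0\<^sub>v c}"
    and x: "x \<in> carrier_vec c" and y: "y \<in> carrier_vec c" and eq: "B *\<^sub>v x = B *\<^sub>v y"
  shows "x = y"
proof (rule eq_vec_of_minus_zero[OF x y])
  have "B *\<^sub>v (x - y) = 0\<^sub>v n" using B x y eq by (simp add: mult_minus_distrib_mat_vec)
  then have "x - y \<in> ker B c" unfolding ker_def using B x y by simp
  then show "x - y = 0\<^sub>v c" using inj by blast
qed

lemma ker_trivial_mult_cancel:
  fixes B :: "'a::field mat"
  assumes B: "B \<in> carrier_mat n c" and inj: "ker B c = {0\<^sub>v c}"
    and X: "X \<in> carrier_mat c q" and Y: "Y \<in> carrier_mat c q" and eq: "B * X = B * Y"
  shows "X = Y"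
proof (rule mat_col_eqI)
  fix j assume "j < dim_col Y"
  then have j: "j < q" using Y by auto
  have "B *\<^sub>v col X j = B *\<^sub>v col Y j" using col_mult2[OF B X j] col_mult2[OF B Y j] eq by simp
  then show "col X j = col Y j" using ker_trivial_mult_vec_cancel[OF B inj] X Y j by auto
qed (use X Y in auto)

lemma ker_trivial_square_img:
  fixes A :: "'a::field mat"
  assumes A: "A \<in> carrier_mat n n" and inj: "ker A n = {0\<^sub>v n}"
  shows "img A n = carrier_vec n"
proof
  show "img A n \<subseteq> carrier_vec n" unfolding img_def using A by auto
  have "det A \<noteq> 0" using det_0_iff_vec_prod_zero_field[OF A] inj A unfolding ker_def by auto
  from det_non_zero_imp_unit[OF A this, of "()"]
  obtain B where B: "B \<in> carrier_mat n n" and AB: "A * B = 1\<^sub>m n"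
    unfolding Units_def ring_mat_def by auto
  have "A *\<^sub>v (B *\<^sub>v y) = y" if "y \<in> carrier_vec n" for y
    using AB A B that by (metis assoc_mult_mat_vec one_mult_mat_vec)
  then show "carrier_vec n \<subseteq> img A n" unfolding img_def using B by (metis image_eqI mult_mat_vec_carrier subsetI)
qed

lemma img_zero_cols:
  assumes F: "F \<in> carrier_mat n 0"
  shows "img F 0 = {0\<^sub>v n}"
proof -
  have "F *\<^sub>v v = 0\<^sub>v n" if "v \<in> carrier_vec 0" for v
    using F that by (intro eq_vecI) (auto simp: scalar_prod_def)
  moreover have "carrier_vec 0 = {0\<^sub>v 0}" by auto
  ultimately show ?thesis unfolding img_def by auto
qed

definition append_col :: "'a::field mat \<Rightarrow> 'a vec \<Rightarrow> 'a mat" where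
  "append_col B w = mat (dim_row B) (Suc (dim_col B))
     (\<lambda>(i, j). if j < dim_col B then B $$ (i, j) else w $ i)"

lemma append_col_carrier: "B \<in> carrier_mat n c \<Longrightarrow> append_col B w \<in> carrier_mat n (Suc c)"
  unfolding append_col_def by auto

lemma append_col_mult_vec:
  assumes B: "B \<in> carrier_mat n c" and w: "w \<in> carrier_vec n" and x: "x \<in> carrier_vec (Suc c)"
  shows "append_col B w *\<^sub>v x = B *\<^sub>v vec c (\<lambda>j. x $ j) + x $ c \<cdot>\<^sub>v w"
proof (rule eq_vecI)
  fix i assume "i < dim_vec (B *\<^sub>v vec c (\<lambda>j. x $ j) + x $ c \<cdot>\<^sub>v w)"
  then have i: "i < n" using B w by auto
  have "(append_col B w *\<^sub>v x) $ i = (\<Sum>j<Suc c. append_col B w $$ (i, j) * x $ j)"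
    using B x i append_col_carrier[OF B, of w]
    by (simp add: scalar_prod_def row_def lessThan_atLeast0)
  also have "\<dots> = (\<Sum>j<c. B $$ (i, j) * x $ j) + w $ i * x $ c"
    using B i unfolding append_col_def by simp
  also have "\<dots> = (B *\<^sub>v vec c (\<lambda>j. x $ j) + x $ c \<cdot>\<^sub>v w) $ i"
    using B w i by (simp add: scalar_prod_def row_def lessThan_atLeast0)
  finally show "(append_col B w *\<^sub>v x) $ i = (B *\<^sub>v vec c (\<lambda>j. x $ j) + x $ c \<cdot>\<^sub>v w) $ i" .
qed (use B w in \<open>auto simp: append_col_def\<close>)

lemma img_append_col:
  assumes B: "B \<in> carrier_mat n c" and w: "w \<in> carrier_vec n"
  shows "img (append_col B w) (Suc c) = {u + t \<cdot>\<^sub>v w | u t. u \<in> img B c}"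
proof
  show "img (append_col B w) (Suc c) \<subseteq> {u + t \<cdot>\<^sub>v w | u t. u \<in> img B c}"
    unfolding img_def using append_col_mult_vec[OF B w] by fastforce
  show "{u + t \<cdot>\<^sub>v w | u t. u \<in> img B c} \<subseteq> img (append_col B w) (Suc c)"
  proof clarify
    fix t and u assume "u \<in> img B c"
    then obtain y where y: "y \<in> carrier_vec c" and u: "u = B *\<^sub>v y" unfolding img_def by auto
    define x where "x = vec (Suc c) (\<lambda>j. if j < c then y $ j else t)"
    have x: "x \<in> carrier_vec (Suc c)" and "vec c (\<lambda>j. x $ j) = y" and "x $ c = t"
      using y unfolding x_def by auto
    then have "append_col B w *\<^sub>v x = u + t \<cdot>\<^sub>v w" using append_col_mult_vec[OF B w x] u by simp
    then show "u + t \<cdot>\<^sub>v w \<in> img (append_col B w) (Suc c)"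
      unfolding img_def by (rule image_eqI[OF sym x])
  qed
qed

lemma ker_append_col_trivial:
  fixes B :: "'a::field mat"
  assumes B: "B \<in> carrier_mat n c" and w: "w \<in> carrier_vec n"
    and inj: "ker B c = {0\<^sub>v c}" and new: "w \<notin> img B c"
  shows "ker (append_col B w) (Suc c) = {0\<^sub>v (Suc c)}"
proof -
  have "x = 0\<^sub>v (Suc c)" if x: "x \<in> carrier_vec (Suc c)" and x0: "append_col B w *\<^sub>v x = 0\<^sub>v n" for x
  proof -
    define y where "y = vec c (\<lambda>j. x $ j)"
    have y: "y \<in> carrier_vec c" unfolding y_def by simp
    have eq: "B *\<^sub>v y + x $ c \<cdot>\<^sub>v w = 0\<^sub>v n"
      using x0 append_col_mult_vec[OF B w x] unfolding y_def by simp
    have xc: "x $ c = 0"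
    proof (rule ccontr)
      assume nz: "x $ c \<noteq> 0"
      have "w = B *\<^sub>v ((- 1 / x $ c) \<cdot>\<^sub>v y)"
      proof (rule eq_vecI)
        fix i assume "i < dim_vec (B *\<^sub>v ((- 1 / x $ c) \<cdot>\<^sub>v y))"
        then have i: "i < n" using B by auto
        have "(B *\<^sub>v y) $ i + x $ c * w $ i = 0" using arg_cong[OF eq, of "\<lambda>v. v $ i"] i B w y by simp
        then show "w $ i = (B *\<^sub>v ((- 1 / x $ c) \<cdot>\<^sub>v y)) $ i"
          using i B y nz by (simp add: mult_mat_vec field_simps add_eq_0_iff)
      qed (use B w in auto)
      then show False using new y unfolding img_def by auto
    qed
    moreover have "(0::'a) \<cdot>\<^sub>v w = 0\<^sub>v n" using w by (intro eq_vecI) auto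
    ultimately have "y \<in> ker B c" using eq B w y unfolding ker_def by simp
    then have "y = 0\<^sub>v c" using inj by blast
    have "x $ i = 0" if "i < Suc c" for i
    proof (cases "i < c")
      case True
      then have "y $ i = 0" using \<open>y = 0\<^sub>v c\<close> by simp
      then show ?thesis using True unfolding y_def by simp
    qed (use that xc in \<open>simp add: less_Suc_eq\<close>)
    then show "x = 0\<^sub>v (Suc c)" using x by (intro eq_vecI) auto
  qed
  then show ?thesis unfolding ker_def using append_col_carrier[OF B, of w] by auto
qed

lemma img_append_col_absorb:
  assumes B: "B \<in> carrier_mat n c" and w: "w \<in> img B c"
  shows "img (append_col B w) (Suc c) = img B c"
proof -
  obtain z where z: "z \<in> carrier_vec c" and wz: "w = B *\<^sub>v z" using w unfolding img_def by blast
  have "u + t \<cdot>\<^sub>v w \<in> img B c" if u: "u \<in> img B c" for u t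
  proof -
    obtain y where y: "y \<in> carrier_vec c" and uy: "u = B *\<^sub>v y" using u unfolding img_def by auto
    have "u + t \<cdot>\<^sub>v w = B *\<^sub>v (y + t \<cdot>\<^sub>v z)"
      unfolding uy wz using B y z by (simp add: mult_add_distrib_mat_vec mult_mat_vec)
    then show ?thesis unfolding img_def using y z by auto
  qed
  moreover have "u = u + 0 \<cdot>\<^sub>v w" if "u \<in> img B c" for u
    using that B z unfolding wz img_def by auto
  ultimately show ?thesis unfolding img_append_col[OF B mult_mat_vec_carrier[OF B z, folded wz]] by blast
qed

lemma img_eq_img_ker_trivial:
  fixes F :: "'a::field mat"
  assumes "F \<in> carrier_mat n m"
  shows "\<exists>c B. B \<in> carrier_mat n c \<and> ker B c = {0\<^sub>v c} \<and> img B c = img F m"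
  using assms
proof (induction m arbitrary: F)
  case 0
  have "ker (0\<^sub>m n 0) 0 = {0\<^sub>v 0}" "img (0\<^sub>m n 0) 0 = img F 0"
    using img_zero_cols[OF "0.prems"] img_zero_cols[of "0\<^sub>m n 0" n] unfolding ker_def by auto
  then show ?case by (intro exI[of _ 0] exI[of _ "0\<^sub>m n 0"]) auto
next
  case (Suc m)
  define F0 where "F0 = mat n m (\<lambda>ij. F $$ ij)"
  define w where "w = col F m"
  have F0: "F0 \<in> carrier_mat n m" and w: "w \<in> carrier_vec n"
    unfolding F0_def w_def using Suc.prems by auto
  have F: "F = append_col F0 w"
    using Suc.prems unfolding append_col_def F0_def w_def by (intro eq_matI) (auto simp: less_Suc_eq)
  obtain c B where B: "B \<in> carrier_mat n c" and inj: "ker B c = {0\<^sub>v c}" and BF0: "img B c = img F0 m"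
    using Suc.IH[OF F0] by blast
  have imgF: "img (append_col B w) (Suc c) = img F (Suc m)"
    unfolding F img_append_col[OF B w] img_append_col[OF F0 w] BF0 ..
  show ?case
  proof (cases "w \<in> img B c")
    case True
    then show ?thesis using B inj imgF img_append_col_absorb[OF B] by auto
  next
    case False
    then show ?thesis using append_col_carrier[OF B] ker_append_col_trivial[OF B w inj] imgF by blast
  qed
qed

section \<open>Modules and homomorphisms\<close>

lemma fd_algebraD:
  assumes "fd_algebra Alg"
  shows "snd Alg \<subseteq> carrier_mat (fst Alg) (fst Alg)" "1\<^sub>m (fst Alg) \<in> snd Alg"
    "\<And>a b. a \<in> snd Alg \<Longrightarrow> b \<in> snd Alg \<Longrightarrow> a + b \<in> snd Alg"
    "\<And>a b. a \<in> snd Alg \<Longrightarrow> b \<in> snd Alg \<Longrightarrow> a * b \<in> snd Alg"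
    "\<And>c a. a \<in> snd Alg \<Longrightarrow> c \<cdot>\<^sub>m a \<in> snd Alg"
  using assms unfolding fd_algebra_def Let_def by auto

lemma is_modD:
  assumes "is_mod Alg l M"
  shows "\<And>a. a \<in> snd Alg \<Longrightarrow> snd M a \<in> carrier_mat (fst M) (fst M)"
    and "snd M (1\<^sub>m (fst Alg)) = 1\<^sub>m (fst M)"
    and "\<And>a b. a \<in> snd Alg \<Longrightarrow> b \<in> snd Alg \<Longrightarrow> snd M (a + b) = snd M a + snd M b"
    and "\<And>c a. a \<in> snd Alg \<Longrightarrow> snd M (c \<cdot>\<^sub>m a) = c \<cdot>\<^sub>m snd M a"
    and "\<And>a b. a \<in> snd Alg \<Longrightarrow> b \<in> snd Alg \<Longrightarrow>
      snd M (a * b) = (if l then snd M a * snd M b else snd M b * snd M a)"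
  using assms unfolding is_mod_def Let_def by auto

lemma is_homD:
  "is_hom Alg M N F \<Longrightarrow> F \<in> carrier_mat (fst N) (fst M)"
  "is_hom Alg M N F \<Longrightarrow> a \<in> snd Alg \<Longrightarrow> F * snd M a = snd N a * F"
  unfolding is_hom_def by auto

lemma is_hom_one: "is_mod Alg l M \<Longrightarrow> is_hom Alg M M (1\<^sub>m (fst M))"
  unfolding is_hom_def using is_modD(1) by fastforce

lemma is_hom_mult:
  assumes M: "is_mod Alg l M" and N: "is_mod Alg l' N" and P: "is_mod Alg l'' P"
    and F: "is_hom Alg M N F" and G: "is_hom Alg N P G"
  shows "is_hom Alg M P (G * F)"
  unfolding is_hom_def
proof (intro conjI ballI)
  have Fc: "F \<in> carrier_mat (fst N) (fst M)" using is_homD(1)[OF F] .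
  have Gc: "G \<in> carrier_mat (fst P) (fst N)" using is_homD(1)[OF G] .
  show "G * F \<in> carrier_mat (fst P) (fst M)" using Fc Gc by simp
  fix a assume a: "a \<in> snd Alg"
  note carriers = Fc Gc is_modD(1)[OF M a] is_modD(1)[OF N a] is_modD(1)[OF P a]
  have "G * F * snd M a = G * (F * snd M a)" using carriers by simp
  also have "\<dots> = (G * snd N a) * F" using is_homD(2)[OF F a] carriers by simp
  also have "\<dots> = snd P a * (G * F)" using is_homD(2)[OF G a] carriers by simp
  finally show "G * F * snd M a = snd P a * (G * F)" .
qed

lemma is_hom_ker_trivial_cancel:
  assumes M: "is_mod Alg l M" and U: "is_mod Alg l' U" and N: "is_mod Alg l'' N"
    and B: "is_hom Alg U N B" and inj: "ker B (fst U) = {0\<^sub>v (fst U)}"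
    and G: "G \<in> carrier_mat (fst U) (fst M)" and BG: "is_hom Alg M N (B * G)"
  shows "is_hom Alg M U G"
  unfolding is_hom_def
proof (intro conjI ballI)
  show "G \<in> carrier_mat (fst U) (fst M)" by (rule G)
  fix a assume a: "a \<in> snd Alg"
  have Bc: "B \<in> carrier_mat (fst N) (fst U)" using is_homD(1)[OF B] .
  note carriers = Bc G is_modD(1)[OF M a] is_modD(1)[OF U a] is_modD(1)[OF N a]
  have "B * (G * snd M a) = (B * G) * snd M a" using carriers by simp
  also have "\<dots> = snd N a * (B * G)" using is_homD(2)[OF BG a] .
  also have "\<dots> = (B * snd U a) * G" using is_homD(2)[OF B a] carriers by simp
  also have "\<dots> = B * (snd U a * G)" using carriers by simp
  finally show "G * snd M a = snd U a * G"
    using ker_trivial_mult_cancel[OF Bc inj] carriers by (meson mult_carrier_mat)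
qed

lemma img_hom_closed:
  assumes f: "is_hom Alg M N f" and M: "is_mod Alg l M" and N: "is_mod Alg l' N"
    and a: "a \<in> snd Alg" and y: "y \<in> img f (fst M)"
  shows "snd N a *\<^sub>v y \<in> img f (fst M)"
proof -
  obtain x where x: "x \<in> carrier_vec (fst M)" and yx: "y = f *\<^sub>v x" using y unfolding img_def by auto
  have fc: "f \<in> carrier_mat (fst N) (fst M)" using is_homD(1)[OF f] .
  have rM: "snd M a \<in> carrier_mat (fst M) (fst M)" using is_modD(1)[OF M a] .
  have "snd N a *\<^sub>v y = (snd N a * f) *\<^sub>v x"
    unfolding yx using fc x is_modD(1)[OF N a] by simp
  also have "\<dots> = f *\<^sub>v (snd M a *\<^sub>v x)" using is_homD(2)[OF f a, symmetric] fc rM x by simp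
  finally show ?thesis unfolding img_def using rM x by simp
qed

lemma submod_ker:
  fixes Alg :: "('k::field) alg"
  assumes M: "is_mod Alg l M" and N: "is_mod Alg l' N" and F: "is_hom Alg M N F"
  shows "submod Alg M (ker F (fst M))"
  unfolding submod_def
proof (intro conjI ballI allI)
  have Fc: "F \<in> carrier_mat (fst N) (fst M)" using is_homD(1)[OF F] .
  show "ker F (fst M) \<subseteq> carrier_vec (fst M)" "0\<^sub>v (fst M) \<in> ker F (fst M)"
    unfolding ker_def using Fc by auto
  show "u + w \<in> ker F (fst M)" if "u \<in> ker F (fst M)" "w \<in> ker F (fst M)" for u w
    using that Fc unfolding ker_def by (simp add: mult_add_distrib_mat_vec[OF Fc])
  show "c \<cdot>\<^sub>v u \<in> ker F (fst M)" if "u \<in> ker F (fst M)" for c u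
    using that Fc unfolding ker_def by (auto simp: mult_mat_vec[OF Fc])
  fix a u assume a: "a \<in> snd Alg" and u: "u \<in> ker F (fst M)"
  have rM: "snd M a \<in> carrier_mat (fst M) (fst M)" and rN: "snd N a \<in> carrier_mat (fst N) (fst N)"
    using is_modD(1)[OF M a] is_modD(1)[OF N a] .
  have uc: "u \<in> carrier_vec (fst M)" and u0: "F *\<^sub>v u = 0\<^sub>v (fst N)" using u Fc unfolding ker_def by auto
  have "F *\<^sub>v (snd M a *\<^sub>v u) = (F * snd M a) *\<^sub>v u" using Fc rM uc by simp
  also have "\<dots> = snd N a *\<^sub>v (F *\<^sub>v u)" using is_homD(2)[OF F a] Fc rN uc by simp
  also have "\<dots> = 0\<^sub>v (fst N)" using u0 rN by auto
  finally show "snd M a *\<^sub>v u \<in> ker F (fst M)" unfolding ker_def using rM uc Fc by simp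
qed

lemma submod_img:
  fixes Alg :: "('k::field) alg"
  assumes M: "is_mod Alg l M" and N: "is_mod Alg l' N" and F: "is_hom Alg M N F"
  shows "submod Alg N (img F (fst M))"
  unfolding submod_def
proof (intro conjI ballI allI)
  have Fc: "F \<in> carrier_mat (fst N) (fst M)" using is_homD(1)[OF F] .
  show "img F (fst M) \<subseteq> carrier_vec (fst N)" unfolding img_def using Fc by auto
  have "F *\<^sub>v 0\<^sub>v (fst M) = 0\<^sub>v (fst N)" using Fc by auto
  then show "0\<^sub>v (fst N) \<in> img F (fst M)" unfolding img_def by (metis image_eqI zero_carrier_vec)
  fix u assume "u \<in> img F (fst M)"
  then obtain x where x: "x \<in> carrier_vec (fst M)" "u = F *\<^sub>v x" unfolding img_def by auto
  show "c \<cdot>\<^sub>v u \<in> img F (fst M)" for c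
  proof -
    have "c \<cdot>\<^sub>v u = F *\<^sub>v (c \<cdot>\<^sub>v x)" using x by (simp add: mult_mat_vec[OF Fc])
    then show ?thesis unfolding img_def using x by simp
  qed
  show "u + w \<in> img F (fst M)" if w: "w \<in> img F (fst M)" for w
  proof -
    obtain y where y: "y \<in> carrier_vec (fst M)" "w = F *\<^sub>v y" using w unfolding img_def by auto
    have "u + w = F *\<^sub>v (x + y)" using x y by (simp add: mult_add_distrib_mat_vec[OF Fc])
    then show ?thesis unfolding img_def using x y by simp
  qed
next
  fix a u assume "a \<in> snd Alg" and "u \<in> img F (fst M)"
  then show "snd N a *\<^sub>v u \<in> img F (fst M)" using img_hom_closed[OF F M N] by simp
qed

lemma essential_trivial_meet:
  assumes "essential Alg M U" and "submod Alg M V" and "U \<inter> V \<subseteq> {0\<^sub>v (fst M)}"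
  shows "V = {0\<^sub>v (fst M)}"
  using assms unfolding essential_def submod_def by blast

lemma ker_trivial_of_essential:
  fixes Alg :: "('k::field) alg"
  assumes U: "essential Alg M U" and M: "is_mod Alg l M" and N: "is_mod Alg l' N"
    and T: "is_hom Alg M N T" and inj_U: "\<And>x. x \<in> U \<Longrightarrow> T *\<^sub>v x = 0\<^sub>v (fst N) \<Longrightarrow> x = 0\<^sub>v (fst M)"
  shows "ker T (fst M) = {0\<^sub>v (fst M)}"
proof (rule essential_trivial_meet[OF U submod_ker[OF M N T]])
  show "U \<inter> ker T (fst M) \<subseteq> {0\<^sub>v (fst M)}" using inj_U is_homD(1)[OF T] unfolding ker_def by auto
qed

lemma is_mod_ker_trivial_pullback:
  fixes Alg :: "('k::field) alg"
  assumes A: "fd_algebra Alg" and N: "is_mod Alg l N"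
    and B: "B \<in> carrier_mat (fst N) c" and inj: "ker B c = {0\<^sub>v c}"
    and \<rho>: "\<And>a. a \<in> snd Alg \<Longrightarrow> \<rho> a \<in> carrier_mat c c"
    and B\<rho>: "\<And>a. a \<in> snd Alg \<Longrightarrow> B * \<rho> a = snd N a * B"
  shows "is_mod Alg l (c, \<rho>)"
  unfolding is_mod_def Let_def fst_conv snd_conv
proof (intro conjI ballI allI)
  have cancel: "X = Y" if "X \<in> carrier_mat c c" "Y \<in> carrier_mat c c" "B * X = B * Y" for X Y
    using ker_trivial_mult_cancel[OF B inj that] .
  have rN: "snd N a \<in> carrier_mat (fst N) (fst N)" if "a \<in> snd Alg" for a using is_modD(1)[OF N that] .
  show "\<rho> a \<in> carrier_mat c c" if "a \<in> snd Alg" for a using \<rho>[OF that] .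
  show "\<rho> (1\<^sub>m (fst Alg)) = 1\<^sub>m c"
    using cancel B\<rho>[OF fd_algebraD(2)[OF A]] \<rho>[OF fd_algebraD(2)[OF A]] is_modD(2)[OF N] B by simp
  fix a assume a: "a \<in> snd Alg"
  note carriers = B \<rho>[OF a] rN[OF a]
  show "\<rho> (k \<cdot>\<^sub>m a) = k \<cdot>\<^sub>m \<rho> a" for k
    using cancel B\<rho>[OF fd_algebraD(5)[OF A a]] \<rho>[OF fd_algebraD(5)[OF A a]] is_modD(4)[OF N a] B\<rho>[OF a]
      carriers mult_smult_distrib[OF B \<rho>[OF a]] by (simp add: mult_smult_assoc_mat)
  fix b assume b: "b \<in> snd Alg"
  note carriers = carriers \<rho>[OF b] rN[OF b]
  show "\<rho> (a + b) = \<rho> a + \<rho> b"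
    using cancel B\<rho>[OF fd_algebraD(3)[OF A a b]] \<rho>[OF fd_algebraD(3)[OF A a b]] is_modD(3)[OF N a b]
      B\<rho>[OF a] B\<rho>[OF b] carriers mult_add_distrib_mat[OF B \<rho>[OF a] \<rho>[OF b]]
    by (simp add: add_mult_distrib_mat)
  have B\<rho>\<rho>: "B * (\<rho> x * \<rho> y) = snd N x * snd N y * B"
    if x: "x \<in> snd Alg" and y: "y \<in> snd Alg" for x y
  proof -
    note carriers = B \<rho>[OF x] \<rho>[OF y] rN[OF x] rN[OF y]
    have "B * (\<rho> x * \<rho> y) = (B * \<rho> x) * \<rho> y" using carriers by simp
    also have "\<dots> = snd N x * (B * \<rho> y)" using B\<rho>[OF x] carriers by simp
    also have "\<dots> = snd N x * snd N y * B" using B\<rho>[OF y] carriers by simp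
    finally show ?thesis .
  qed
  have "B * \<rho> (a * b) = B * (if l then \<rho> a * \<rho> b else \<rho> b * \<rho> a)"
    using B\<rho>[OF fd_algebraD(4)[OF A a b]] is_modD(5)[OF N a b] B\<rho>\<rho>[OF a b] B\<rho>\<rho>[OF b a] by simp
  then show "\<rho> (a * b) = (if l then \<rho> a * \<rho> b else \<rho> b * \<rho> a)"
    using cancel \<rho>[OF fd_algebraD(4)[OF A a b]] carriers by simp
qed

lemma submod_img_as_mod:
  fixes Alg :: "('k::field) alg"
  assumes A: "fd_algebra Alg" and N: "is_mod Alg l N"
    and B: "B \<in> carrier_mat (fst N) c" and inj: "ker B c = {0\<^sub>v c}"
    and sub: "submod Alg N (img B c)"
  shows "\<exists>\<rho>. is_mod Alg l (c, \<rho>) \<and> is_hom Alg (c, \<rho>) N B"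
proof -
  have "\<forall>a \<in> snd Alg. \<exists>R. R \<in> carrier_mat c c \<and> B * R = snd N a * B"
  proof
    fix a assume a: "a \<in> snd Alg"
    have rN: "snd N a \<in> carrier_mat (fst N) (fst N)" using is_modD(1)[OF N a] .
    have "img (snd N a * B) c \<subseteq> img B c"
    proof
      fix y assume "y \<in> img (snd N a * B) c"
      then obtain x where x: "x \<in> carrier_vec c" and y: "y = snd N a *\<^sub>v (B *\<^sub>v x)"
        unfolding img_def using B rN by auto
      have "B *\<^sub>v x \<in> img B c" unfolding img_def using x by simp
      then show "y \<in> img B c" using sub a unfolding y submod_def by blast
    qed
    then show "\<exists>R. R \<in> carrier_mat c c \<and> B * R = snd N a * B"
      using mat_factor_through_img[OF mult_carrier_mat[OF rN B] B] by blast
  qed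
  from bchoice[OF this] obtain \<rho>
    where \<rho>: "\<And>a. a \<in> snd Alg \<Longrightarrow> \<rho> a \<in> carrier_mat c c \<and> B * \<rho> a = snd N a * B" by auto
  have "is_mod Alg l (c, \<rho>)" using is_mod_ker_trivial_pullback[OF A N B inj] \<rho> by blast
  moreover have "is_hom Alg (c, \<rho>) N B" unfolding is_hom_def using B \<rho> by simp
  ultimately show ?thesis by blast
qed

lemma mult_right_fixed_of_ker_subset:
  fixes f g K :: "'a::field mat"
  assumes f: "f \<in> carrier_mat n m" and g: "g \<in> carrier_mat e m" and K: "K \<in> carrier_mat m m"
    and fK: "f * K = f" and kernels: "ker f m \<subseteq> ker g m"
  shows "g * K = g"
proof (rule eq_mat_on_vecI[of _ e m])
  show "g * K \<in> carrier_mat e m" "g \<in> carrier_mat e m" using g K by auto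
  fix x :: "'a vec" assume x: "x \<in> carrier_vec m"
  have "f *\<^sub>v (K *\<^sub>v x - x) = (f * K) *\<^sub>v x - f *\<^sub>v x"
    using f K x by (simp add: mult_minus_distrib_mat_vec)
  then have "K *\<^sub>v x - x \<in> ker f m" unfolding ker_def using fK f K x by simp
  then have "g *\<^sub>v (K *\<^sub>v x - x) = 0\<^sub>v e" using kernels g unfolding ker_def by auto
  then have diff: "g *\<^sub>v (K *\<^sub>v x) - g *\<^sub>v x = 0\<^sub>v e"
    using g K x by (simp add: mult_minus_distrib_mat_vec)
  have "g *\<^sub>v (K *\<^sub>v x) = g *\<^sub>v x" by (rule eq_vec_of_minus_zero[OF _ _ diff]) (use g K x in auto)
  then show "(g * K) *\<^sub>v x = g *\<^sub>v x" using g K x by simp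
qed

lemma is_hom_factor_through_split_epi:
  assumes M: "is_mod Alg l M" and U: "is_mod Alg l' U" and E: "is_mod Alg l'' E"
    and G: "is_hom Alg M U G" and H: "H \<in> carrier_mat (fst M) (fst U)" and GH: "G * H = 1\<^sub>m (fst U)"
    and g: "is_hom Alg M E g" and gHG: "g * H * G = g"
  shows "is_hom Alg U E (g * H)"
  unfolding is_hom_def
proof (intro conjI ballI)
  have Gc: "G \<in> carrier_mat (fst U) (fst M)" and gc: "g \<in> carrier_mat (fst E) (fst M)"
    using is_homD(1)[OF G] is_homD(1)[OF g] .
  show "g * H \<in> carrier_mat (fst E) (fst U)" using gc H by simp
  fix a assume a: "a \<in> snd Alg"
  have rU: "snd U a \<in> carrier_mat (fst U) (fst U)" using is_modD(1)[OF U a] .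
  note carriers = Gc gc H is_modD(1)[OF M a] rU is_modD(1)[OF E a]
  have gH: "g * H \<in> carrier_mat (fst E) (fst U)" using gc H by simp
  have "g * H * snd U a = g * H * (snd U a * (G * H))" using GH carriers by simp
  also have "\<dots> = g * H * ((snd U a * G) * H)" by (simp only: assoc_mult_mat[OF rU Gc H])
  also have "\<dots> = g * H * (snd U a * G) * H"
    by (simp only: assoc_mult_mat[OF gH mult_carrier_mat[OF rU Gc] H])
  also have "\<dots> = g * H * (G * snd M a) * H" using is_homD(2)[OF G a] by simp
  also have "\<dots> = (g * H * G) * snd M a * H"
    by (subst assoc_mult_mat[OF gH Gc is_modD(1)[OF M a]]) (rule refl)
  also have "\<dots> = snd E a * g * H" using gHG is_homD(2)[OF g a] by simp
  also have "\<dots> = snd E a * (g * H)" using carriers by simp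
  finally show "g * H * snd U a = snd E a * (g * H)" .
qed

section \<open>Injective and projective modules\<close>

lemma injective_mod_extend:
  fixes Alg :: "('k::field) alg"
  assumes A: "fd_algebra Alg" and E: "injective_mod Alg l E"
    and M: "is_mod Alg l M" and N: "is_mod Alg l N"
    and f: "is_hom Alg M N f" and g: "is_hom Alg M E g"
    and kernels: "ker f (fst M) \<subseteq> ker g (fst M)"
  shows "\<exists>h. is_hom Alg N E h \<and> h * f = g"
proof -
  have fc: "f \<in> carrier_mat (fst N) (fst M)" and gc: "g \<in> carrier_mat (fst E) (fst M)"
    using is_homD(1)[OF f] is_homD(1)[OF g] .
  have EM: "is_mod Alg l E" using E unfolding injective_mod_def by simp
  \<comment> \<open>Replace \<open>f\<close> by the inclusion \<open>B\<close> of its image \<open>U\<close>: with \<open>B * G = f\<close>, \<open>f * H = B\<close> and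
    \<open>G * H = 1\<close>, the map \<open>g * H\<close> is a homomorphism on \<open>U\<close> and injectivity of \<open>E\<close> extends it along \<open>B\<close>.\<close>
  obtain c B where B: "B \<in> carrier_mat (fst N) c" and inj: "ker B c = {0\<^sub>v c}"
    and BF: "img B c = img f (fst M)"
    using img_eq_img_ker_trivial[OF fc] by blast
  obtain \<rho> where U: "is_mod Alg l (c, \<rho>)" and BU: "is_hom Alg (c, \<rho>) N B"
    using submod_img_as_mod[OF A N B inj] submod_img[OF M N f] BF by auto
  obtain G where G: "G \<in> carrier_mat c (fst M)" and BG: "B * G = f"
    using mat_factor_through_img[OF fc B] BF by blast
  obtain H where H: "H \<in> carrier_mat (fst M) c" and fH: "f * H = B"
    using mat_factor_through_img[OF B fc] BF by blast
  have "B * (G * H) = B * 1\<^sub>m c" using BG fH B G H by (metis assoc_mult_mat right_mult_one_mat)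
  then have GH: "G * H = 1\<^sub>m c"
    using ker_trivial_mult_cancel[OF B inj mult_carrier_mat[OF G H] one_carrier_mat] by simp
  have "f * (H * G) = f" using BG fH fc G H by (metis assoc_mult_mat)
  then have "g * (H * G) = g" using mult_right_fixed_of_ker_subset[OF fc gc _ _ kernels] H G by simp
  then have gHG: "g * H * G = g" using gc H G by simp
  have "is_hom Alg M (c, \<rho>) G" using is_hom_ker_trivial_cancel[OF M U N BU] inj G BG f by simp
  then have gH: "is_hom Alg (c, \<rho>) E (g * H)"
    using is_hom_factor_through_split_epi[OF M U EM _ _ _ g gHG] H GH by simp
  have "inj_on (\<lambda>v. B *\<^sub>v v) (carrier_vec c)"
    using ker_trivial_mult_vec_cancel[OF B inj] by (auto intro: inj_onI)
  then obtain h where h: "is_hom Alg N E h" and hB: "h * B = g * H"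
    using E U N BU gH unfolding injective_mod_def by fastforce
  have "h * f = (h * B) * G" using is_homD(1)[OF h] B G BG by simp
  then show ?thesis using h hB gHG by auto
qed

lemma projective_mod_split:
  assumes "projective_mod Alg l P" and "is_mod Alg l M" and "is_hom Alg M P g"
    and "img g (fst M) = carrier_vec (fst P)"
  shows "\<exists>s. is_hom Alg P M s \<and> g * s = 1\<^sub>m (fst P)"
  using assms is_hom_one[of Alg l P] unfolding projective_mod_def by blast

lemma injective_mod_retract:
  assumes E: "injective_mod Alg l E" and X: "is_mod Alg l X"
    and i: "is_hom Alg X E i" and r: "is_hom Alg E X r" and ri: "r * i = 1\<^sub>m (fst X)"
  shows "injective_mod Alg l X"
  unfolding injective_mod_def
proof (intro conjI allI impI)
  show "is_mod Alg l X" by (rule X)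
  have EM: "is_mod Alg l E" using E unfolding injective_mod_def by simp
  fix M N f g
  assume a: "is_mod Alg l M \<and> is_mod Alg l N \<and> is_hom Alg M N f \<and>
    inj_on (\<lambda>v. f *\<^sub>v v) (carrier_vec (fst M)) \<and> is_hom Alg M X g"
  then have M: "is_mod Alg l M" and N: "is_mod Alg l N" and f: "is_hom Alg M N f"
    and g: "is_hom Alg M X g" by auto
  have "is_hom Alg M E (i * g)" using is_hom_mult[OF M X EM g i] .
  then obtain h where h: "is_hom Alg N E h" and hf: "h * f = i * g"
    using E a unfolding injective_mod_def by blast
  note carriers = is_homD(1)[OF r] is_homD(1)[OF h] is_homD(1)[OF f] is_homD(1)[OF i] is_homD(1)[OF g]
  have "r * h * f = (r * i) * g" using hf carriers by simp
  then have "r * h * f = g" using ri carriers by simp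
  moreover have "is_hom Alg N X (r * h)" using is_hom_mult[OF N EM X h r] .
  ultimately show "\<exists>h. is_hom Alg N X h \<and> h * f = g" by blast
qed

definition zero_mod :: "('k::field) amod" where
  "zero_mod = (0, \<lambda>_. 1\<^sub>m 0)"

lemma is_hom_zero_mod:
  assumes M: "is_mod Alg l M"
  shows "is_hom Alg zero_mod M (0\<^sub>m (fst M) 0)"
  unfolding is_hom_def zero_mod_def fst_conv snd_conv
proof (intro conjI ballI)
  fix a assume "a \<in> snd Alg"
  then have "snd M a \<in> carrier_mat (fst M) (fst M)" using is_modD(1)[OF M] by blast
  then show "0\<^sub>m (fst M) 0 * 1\<^sub>m 0 = snd M a * 0\<^sub>m (fst M) 0" by (intro eq_matI) auto
qed simp

lemma projective_mod_zero_mod: "projective_mod Alg l zero_mod"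
  unfolding projective_mod_def
proof (intro conjI allI impI)
  show "is_mod Alg l zero_mod" unfolding is_mod_def Let_def zero_mod_def by (auto intro: eq_matI)
  fix M N g f
  assume a: "is_mod Alg l M \<and> is_mod Alg l N \<and> is_hom Alg M N g \<and>
    img g (fst M) = carrier_vec (fst N) \<and> is_hom Alg zero_mod N f"
  then have "g * 0\<^sub>m (fst M) 0 = f"
    using is_homD(1)[of Alg M N g] is_homD(1)[of Alg zero_mod N f] unfolding zero_mod_def
    by (intro eq_matI) auto
  then show "\<exists>h. is_hom Alg zero_mod M h \<and> g * h = f" using is_hom_zero_mod a by blast
qed

lemma proj_dim_projective:
  fixes Alg :: "('k::field) alg"
  assumes P: "projective_mod Alg l P"
  shows "proj_dim Alg l P = 0"
proof -
  have PM: "is_mod Alg l P" using P unfolding projective_mod_def by simp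
  define Q where "Q k = (if k = 0 then P else zero_mod)" for k :: nat
  define dd where "dd k = (0\<^sub>m (fst (Q k)) 0 :: 'k mat)" for k
  have QS: "Q (Suc k) = zero_mod" for k unfolding Q_def by simp
  have z0: "fst (zero_mod :: 'k amod) = 0" unfolding zero_mod_def by simp
  have QM: "is_mod Alg l (Q k)" for k
    unfolding Q_def using PM projective_mod_zero_mod[of Alg l] unfolding projective_mod_def by simp
  have "proj_resolution Alg l P Q dd (1\<^sub>m (fst P))"
    unfolding proj_resolution_def
  proof (intro conjI allI)
    show "is_mod Alg l P" by (rule PM)
    show "projective_mod Alg l (Q i)" for i unfolding Q_def using P projective_mod_zero_mod[of Alg l] by simp
    show "is_hom Alg (Q 0) P (1\<^sub>m (fst P))" unfolding Q_def using is_hom_one[OF PM] by simp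
    show "is_hom Alg (Q (Suc i)) (Q i) (dd i)" for i
      unfolding QS dd_def using is_hom_zero_mod[OF QM] .
    show "img (1\<^sub>m (fst P)) (fst (Q 0)) = carrier_vec (fst P)" unfolding img_def Q_def by auto
    have "img (dd 0) (fst (Q 1)) = {0\<^sub>v (fst P)}"
      unfolding dd_def using img_zero_cols[of "0\<^sub>m (fst P) 0" "fst P"] z0 by (simp add: Q_def)
    moreover have "ker (1\<^sub>m (fst P)) (fst (Q 0)) = {0\<^sub>v (fst P)}" unfolding ker_def Q_def by auto
    ultimately show "img (dd 0) (fst (Q 1)) = ker (1\<^sub>m (fst P)) (fst (Q 0))" by (rule trans[OF _ sym])
    show "img (dd (Suc i)) (fst (Q (Suc (Suc i)))) = ker (dd i) (fst (Q (Suc i)))" for i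
      unfolding dd_def QS z0 img_zero_cols[OF zero_carrier_mat] ker_def by auto
  qed
  moreover have "\<forall>i>0. fst (Q i) = 0" unfolding Q_def using z0 by simp
  ultimately have "proj_dim Alg l P \<le> enat 0" unfolding proj_dim_def by (intro Inf_lower) blast
  then show ?thesis by (metis le_zero_eq zero_enat_def)
qed

section \<open>The regular module\<close>

lemma linear_fun_as_mat:
  fixes T :: "'a::field vec \<Rightarrow> 'a vec"
  assumes Tc: "\<And>x. x \<in> carrier_vec m \<Longrightarrow> T x \<in> carrier_vec n"
    and T_add: "\<And>x y. x \<in> carrier_vec m \<Longrightarrow> y \<in> carrier_vec m \<Longrightarrow> T (x + y) = T x + T y"
    and T_smult: "\<And>c x. x \<in> carrier_vec m \<Longrightarrow> T (c \<cdot>\<^sub>v x) = c \<cdot>\<^sub>v T x"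
  shows "\<exists>\<alpha> \<in> carrier_mat n m. \<forall>x \<in> carrier_vec m. \<alpha> *\<^sub>v x = T x"
proof (intro bexI ballI)
  define \<alpha> where "\<alpha> = mat n m (\<lambda>(i, j). T (unit_vec m j) $ i)"
  show \<alpha>: "\<alpha> \<in> carrier_mat n m" unfolding \<alpha>_def by simp
  fix x :: "'a vec" assume x: "x \<in> carrier_vec m"
  define trunc where "trunc k = vec m (\<lambda>i. if i < k then x $ i else 0)" for k
  have trunc: "trunc k \<in> carrier_vec m" for k unfolding trunc_def by simp
  have "k \<le> m \<longrightarrow> \<alpha> *\<^sub>v trunc k = T (trunc k)" for k
  proof (induction k)
    case 0
    have "trunc 0 = 0 \<cdot>\<^sub>v trunc 0" unfolding trunc_def by (intro eq_vecI) auto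
    then have "T (trunc 0) = 0 \<cdot>\<^sub>v T (trunc 0)" using T_smult[OF trunc] by metis
    also have "\<dots> = 0\<^sub>v n" using Tc[OF trunc[of 0]] by (intro eq_vecI) auto
    also have "\<dots> = \<alpha> *\<^sub>v trunc 0"
      using \<alpha> unfolding trunc_def by (intro eq_vecI) (auto simp: scalar_prod_def)
    finally show ?case by simp
  next
    case (Suc k)
    show ?case
    proof
      assume k: "Suc k \<le> m"
      have split: "trunc (Suc k) = trunc k + x $ k \<cdot>\<^sub>v unit_vec m k"
        unfolding trunc_def using k by (intro eq_vecI) (auto simp: less_Suc_eq)
      have "\<alpha> *\<^sub>v unit_vec m k = T (unit_vec m k)"
        using mult_mat_vec_unit_vec[OF \<alpha>, of k] k Tc[OF unit_vec_carrier[of m k]] unfolding \<alpha>_def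
        by (intro eq_vecI) auto
      then have "\<alpha> *\<^sub>v trunc (Suc k) = T (trunc k) + x $ k \<cdot>\<^sub>v T (unit_vec m k)"
        unfolding split using Suc.IH k \<alpha> trunc
        by (simp add: mult_add_distrib_mat_vec[OF \<alpha> trunc] mult_mat_vec[OF \<alpha>])
      also have "\<dots> = T (trunc (Suc k))"
        unfolding split using T_add[OF trunc, of "x $ k \<cdot>\<^sub>v unit_vec m k"] T_smult by simp
      finally show "\<alpha> *\<^sub>v trunc (Suc k) = T (trunc (Suc k))" .
    qed
  qed
  moreover have "trunc m = x" unfolding trunc_def using x by (intro eq_vecI) auto
  ultimately show "\<alpha> *\<^sub>v x = T x" by auto
qed

lemma regular_mod_generator_map:
  fixes Alg :: "('k::field) alg"
  assumes A: "fd_algebra Alg" and R: "is_mod Alg l R" and v: "v \<in> carrier_vec (fst R)"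
    and bij: "bij_betw (\<lambda>a. snd R a *\<^sub>v v) (snd Alg) (carrier_vec (fst R))"
    and N: "is_mod Alg l' N" and w: "w \<in> carrier_vec (fst N)"
  shows "\<exists>\<alpha> \<in> carrier_mat (fst N) (fst R). \<forall>a \<in> snd Alg. \<alpha> *\<^sub>v (snd R a *\<^sub>v v) = snd N a *\<^sub>v w"
proof -
  define gen where "gen a = snd R a *\<^sub>v v" for a
  define coord where "coord = the_inv_into (snd Alg) gen"
  have rR: "snd R a \<in> carrier_mat (fst R) (fst R)" and rN: "snd N a \<in> carrier_mat (fst N) (fst N)"
    if "a \<in> snd Alg" for a using is_modD(1)[OF R that] is_modD(1)[OF N that] by auto
  have coord: "coord x \<in> snd Alg" "gen (coord x) = x" if "x \<in> carrier_vec (fst R)" for x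
    using bij_betwE[OF bij_betw_the_inv_into[OF bij]] f_the_inv_into_f_bij_betw[OF bij] that
    unfolding coord_def gen_def by auto
  have coord_gen: "coord (gen a) = a" if "a \<in> snd Alg" for a
    using the_inv_into_f_f[OF bij_betw_imp_inj_on[OF bij] that] unfolding coord_def gen_def .
  define T where "T x = snd N (coord x) *\<^sub>v w" for x
  have "\<exists>\<alpha> \<in> carrier_mat (fst N) (fst R). \<forall>x \<in> carrier_vec (fst R). \<alpha> *\<^sub>v x = T x"
  proof (rule linear_fun_as_mat)
    fix x y :: "'k vec" and c :: 'k assume x: "x \<in> carrier_vec (fst R)"
    show "T x \<in> carrier_vec (fst N)" unfolding T_def using rN[OF coord(1)[OF x]] w by simp
    have "gen (c \<cdot>\<^sub>m coord x) = c \<cdot>\<^sub>v x"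
      using is_modD(4)[OF R coord(1)[OF x]] coord(2)[OF x] rR[OF coord(1)[OF x]] v
      unfolding gen_def by (simp add: smult_mat_mult_vec)
    then have "coord (c \<cdot>\<^sub>v x) = c \<cdot>\<^sub>m coord x"
      using coord_gen[OF fd_algebraD(5)[OF A coord(1)[OF x]], of c] by simp
    then show "T (c \<cdot>\<^sub>v x) = c \<cdot>\<^sub>v T x"
      unfolding T_def using is_modD(4)[OF N coord(1)[OF x]] rN[OF coord(1)[OF x]] w
      by (simp add: smult_mat_mult_vec)
    assume y: "y \<in> carrier_vec (fst R)"
    have "gen (coord x + coord y) = x + y"
      using is_modD(3)[OF R coord(1)[OF x] coord(1)[OF y]] coord[OF x] coord[OF y]
        add_mult_distrib_mat_vec[OF rR[OF coord(1)[OF x]] rR[OF coord(1)[OF y]] v]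
      unfolding gen_def by simp
    then have "coord (x + y) = coord x + coord y"
      using coord_gen[OF fd_algebraD(3)[OF A coord(1)[OF x] coord(1)[OF y]]] by simp
    then show "T (x + y) = T x + T y"
      unfolding T_def using is_modD(3)[OF N coord(1)[OF x] coord(1)[OF y]]
        add_mult_distrib_mat_vec[OF rN[OF coord(1)[OF x]] rN[OF coord(1)[OF y]] w] by simp
  qed
  then obtain \<alpha> where \<alpha>: "\<alpha> \<in> carrier_mat (fst N) (fst R)" and \<alpha>T: "\<And>x. x \<in> carrier_vec (fst R) \<Longrightarrow> \<alpha> *\<^sub>v x = T x"
    by blast
  have "\<alpha> *\<^sub>v (snd R a *\<^sub>v v) = snd N a *\<^sub>v w" if "a \<in> snd Alg" for a
    using \<alpha>T[of "gen a"] rR[OF that] v coord_gen[OF that] unfolding T_def gen_def by simp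
  then show ?thesis using \<alpha> by blast
qed

lemma regular_mod_hom:
  fixes Alg :: "('k::field) alg"
  assumes A: "fd_algebra Alg" and R: "is_mod Alg False R" and v: "v \<in> carrier_vec (fst R)"
    and bij: "bij_betw (\<lambda>a. snd R a *\<^sub>v v) (snd Alg) (carrier_vec (fst R))"
    and N: "is_mod Alg False N" and w: "w \<in> carrier_vec (fst N)"
  shows "\<exists>\<alpha>. is_hom Alg R N \<alpha> \<and> (\<forall>a \<in> snd Alg. \<alpha> *\<^sub>v (snd R a *\<^sub>v v) = snd N a *\<^sub>v w)"
proof -
  obtain \<alpha> where \<alpha>: "\<alpha> \<in> carrier_mat (fst N) (fst R)"
    and \<alpha>_gen: "\<And>a. a \<in> snd Alg \<Longrightarrow> \<alpha> *\<^sub>v (snd R a *\<^sub>v v) = snd N a *\<^sub>v w"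
    using regular_mod_generator_map[OF A R v bij N w] by blast
  have rR: "snd R a \<in> carrier_mat (fst R) (fst R)" and rN: "snd N a \<in> carrier_mat (fst N) (fst N)"
    if "a \<in> snd Alg" for a using is_modD(1)[OF R that] is_modD(1)[OF N that] by auto
  have "\<alpha> * snd R b = snd N b * \<alpha>" if b: "b \<in> snd Alg" for b
  proof (rule eq_mat_on_vecI)
    show "\<alpha> * snd R b \<in> carrier_mat (fst N) (fst R)" "snd N b * \<alpha> \<in> carrier_mat (fst N) (fst R)"
      using \<alpha> rR[OF b] rN[OF b] by auto
    fix x :: "'k vec" assume "x \<in> carrier_vec (fst R)"
    then obtain a where a: "a \<in> snd Alg" and xa: "x = snd R a *\<^sub>v v"
      using bij_betw_imp_surj_on[OF bij] by force
    have "(\<alpha> * snd R b) *\<^sub>v x = \<alpha> *\<^sub>v (snd R (a * b) *\<^sub>v v)"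
      using is_modD(5)[OF R a b] \<alpha> rR[OF a] rR[OF b] v unfolding xa by simp
    also have "\<dots> = snd N b *\<^sub>v (snd N a *\<^sub>v w)"
      using \<alpha>_gen[OF fd_algebraD(4)[OF A a b]] is_modD(5)[OF N a b] rN[OF a] rN[OF b] w by simp
    also have "\<dots> = (snd N b * \<alpha>) *\<^sub>v x" using \<alpha>_gen[OF a] \<alpha> rN[OF b] rR[OF a] v unfolding xa by simp
    finally show "(\<alpha> * snd R b) *\<^sub>v x = (snd N b * \<alpha>) *\<^sub>v x" .
  qed
  then have "is_hom Alg R N \<alpha>" unfolding is_hom_def using \<alpha> by blast
  then show ?thesis using \<alpha>_gen by blast
qed

lemma regular_mod_retraction:
  fixes Alg :: "('k::field) alg"
  assumes A: "fd_algebra Alg" and R: "regular_mod Alg False R" and R': "regular_mod Alg False R'"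
  shows "\<exists>\<alpha> \<beta>. is_hom Alg R R' \<alpha> \<and> is_hom Alg R' R \<beta> \<and> \<beta> * \<alpha> = 1\<^sub>m (fst R)"
proof -
  obtain v where v: "v \<in> carrier_vec (fst R)"
    and bij: "bij_betw (\<lambda>a. snd R a *\<^sub>v v) (snd Alg) (carrier_vec (fst R))"
    using R unfolding regular_mod_def by blast
  obtain v' where v': "v' \<in> carrier_vec (fst R')"
    and bij': "bij_betw (\<lambda>a. snd R' a *\<^sub>v v') (snd Alg) (carrier_vec (fst R'))"
    using R' unfolding regular_mod_def by blast
  have RM: "is_mod Alg False R" and RM': "is_mod Alg False R'"
    using R R' unfolding regular_mod_def by auto
  obtain \<alpha> where \<alpha>: "is_hom Alg R R' \<alpha>" and \<alpha>v: "\<forall>a \<in> snd Alg. \<alpha> *\<^sub>v (snd R a *\<^sub>v v) = snd R' a *\<^sub>v v'"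
    using regular_mod_hom[OF A RM v bij RM' v'] by blast
  obtain \<beta> where \<beta>: "is_hom Alg R' R \<beta>" and \<beta>v: "\<forall>a \<in> snd Alg. \<beta> *\<^sub>v (snd R' a *\<^sub>v v') = snd R a *\<^sub>v v"
    using regular_mod_hom[OF A RM' v' bij' RM v] by blast
  have "\<beta> * \<alpha> = 1\<^sub>m (fst R)"
  proof (rule eq_mat_on_vecI)
    show "\<beta> * \<alpha> \<in> carrier_mat (fst R) (fst R)" "1\<^sub>m (fst R) \<in> carrier_mat (fst R) (fst R)"
      using is_homD(1)[OF \<alpha>] is_homD(1)[OF \<beta>] by auto
    fix x :: "'k vec" assume x: "x \<in> carrier_vec (fst R)"
    then obtain a where a: "a \<in> snd Alg" and xa: "x = snd R a *\<^sub>v v"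
      using bij_betw_imp_surj_on[OF bij] by force
    show "(\<beta> * \<alpha>) *\<^sub>v x = 1\<^sub>m (fst R) *\<^sub>v x"
      using \<alpha>v \<beta>v a xa x is_homD(1)[OF \<alpha>] is_homD(1)[OF \<beta>] by simp
  qed
  then show ?thesis using \<alpha> \<beta> by blast
qed

section \<open>Injective coresolutions\<close>

lemma inj_coresolutionD:
  assumes "inj_coresolution Alg l M I d \<epsilon>"
  shows "is_mod Alg l M" "\<And>i. injective_mod Alg l (I i)" "\<And>i. is_mod Alg l (I i)"
    "is_hom Alg M (I 0) \<epsilon>" "\<And>i. is_hom Alg (I i) (I (Suc i)) (d i)"
    "ker \<epsilon> (fst M) = {0\<^sub>v (fst M)}"
    "img \<epsilon> (fst M) = ker (d 0) (fst (I 0))"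
    "\<And>i. img (d i) (fst (I i)) = ker (d (Suc i)) (fst (I (Suc i)))"
  using assms unfolding inj_coresolution_def injective_mod_def by auto

lemma inj_coresolution_lift_base:
  fixes Alg :: "('k::field) alg"
  assumes A: "fd_algebra Alg"
    and CI: "inj_coresolution Alg l X I d \<epsilon>" and CJ: "inj_coresolution Alg l Y J e \<epsilon>'"
    and \<alpha>: "is_hom Alg X Y \<alpha>"
  shows "\<exists>\<phi>. is_hom Alg (I 0) (J 0) \<phi> \<and> \<phi> * \<epsilon> = \<epsilon>' * \<alpha> \<and>
    ker (d 0) (fst (I 0)) \<subseteq> ker (e 0 * \<phi>) (fst (I 0))"
proof -
  note I = inj_coresolutionD[OF CI] and J = inj_coresolutionD[OF CJ]
  have \<epsilon>: "\<epsilon> \<in> carrier_mat (fst (I 0)) (fst X)" using is_homD(1)[OF I(4)] .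
  have "inj_on (\<lambda>v. \<epsilon> *\<^sub>v v) (carrier_vec (fst X))"
    using ker_trivial_mult_vec_cancel[OF \<epsilon> I(6)] by (auto intro: inj_onI)
  moreover have "is_hom Alg X (J 0) (\<epsilon>' * \<alpha>)" using is_hom_mult[OF I(1) J(1) J(3) \<alpha> J(4)] .
  ultimately obtain \<phi> where \<phi>: "is_hom Alg (I 0) (J 0) \<phi>" and \<phi>\<epsilon>: "\<phi> * \<epsilon> = \<epsilon>' * \<alpha>"
    using J(2)[of 0] I(1) I(3) I(4) unfolding injective_mod_def by blast
  have "x \<in> ker (e 0 * \<phi>) (fst (I 0))" if x: "x \<in> ker (d 0) (fst (I 0))" for x
  proof -
    obtain z where z: "z \<in> carrier_vec (fst X)" and xz: "x = \<epsilon> *\<^sub>v z"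
      using x I(7) unfolding img_def by blast
    have carriers: "\<phi> \<in> carrier_mat (fst (J 0)) (fst (I 0))" "\<alpha> \<in> carrier_mat (fst Y) (fst X)"
      "\<epsilon>' \<in> carrier_mat (fst (J 0)) (fst Y)" "e 0 \<in> carrier_mat (fst (J (Suc 0))) (fst (J 0))"
      using is_homD(1) \<phi> \<alpha> J(4) J(5) by blast+
    have "\<phi> *\<^sub>v x = \<epsilon>' *\<^sub>v (\<alpha> *\<^sub>v z)"
      using \<phi>\<epsilon> carriers \<epsilon> z unfolding xz by (metis assoc_mult_mat_vec mult_mat_vec_carrier)
    then have "\<phi> *\<^sub>v x \<in> ker (e 0) (fst (J 0))" using J(7) carriers z unfolding img_def by auto
    then show ?thesis using x carriers unfolding ker_def by auto
  qed
  then show ?thesis using \<phi> \<phi>\<epsilon> by blast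
qed

lemma inj_coresolution_lift_step:
  fixes Alg :: "('k::field) alg"
  assumes A: "fd_algebra Alg"
    and CI: "inj_coresolution Alg l X I d \<epsilon>" and CJ: "inj_coresolution Alg l Y J e \<epsilon>'"
    and \<phi>: "is_hom Alg (I k) (J k) \<phi>"
    and kernels: "ker (d k) (fst (I k)) \<subseteq> ker (e k * \<phi>) (fst (I k))"
  shows "\<exists>\<psi>. is_hom Alg (I (Suc k)) (J (Suc k)) \<psi> \<and> \<psi> * d k = e k * \<phi> \<and>
    ker (d (Suc k)) (fst (I (Suc k))) \<subseteq> ker (e (Suc k) * \<psi>) (fst (I (Suc k)))"
proof -
  note I = inj_coresolutionD[OF CI] and J = inj_coresolutionD[OF CJ]
  obtain \<psi> where \<psi>: "is_hom Alg (I (Suc k)) (J (Suc k)) \<psi>" and \<psi>d: "\<psi> * d k = e k * \<phi>"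
    using injective_mod_extend[OF A J(2) I(3) I(3) I(5) is_hom_mult[OF I(3) J(3) J(3) \<phi> J(5)] kernels]
    by blast
  have "x \<in> ker (e (Suc k) * \<psi>) (fst (I (Suc k)))" if x: "x \<in> ker (d (Suc k)) (fst (I (Suc k)))" for x
  proof -
    obtain z where z: "z \<in> carrier_vec (fst (I k))" and xz: "x = d k *\<^sub>v z"
      using x I(8)[of k] unfolding img_def by blast
    have carriers: "\<psi> \<in> carrier_mat (fst (J (Suc k))) (fst (I (Suc k)))"
      "\<phi> \<in> carrier_mat (fst (J k)) (fst (I k))" "d k \<in> carrier_mat (fst (I (Suc k))) (fst (I k))"
      "e k \<in> carrier_mat (fst (J (Suc k))) (fst (J k))"
      "e (Suc k) \<in> carrier_mat (fst (J (Suc (Suc k)))) (fst (J (Suc k)))"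
      using is_homD(1) \<psi> \<phi> I(5) J(5) by blast+
    have "\<psi> *\<^sub>v x = e k *\<^sub>v (\<phi> *\<^sub>v z)"
      using \<psi>d carriers z unfolding xz by (metis assoc_mult_mat_vec)
    then have "\<psi> *\<^sub>v x \<in> ker (e (Suc k)) (fst (J (Suc k)))"
      using J(8)[of k] carriers z unfolding img_def by auto
    then show ?thesis using x carriers unfolding ker_def by auto
  qed
  then show ?thesis using \<psi> \<psi>d by blast
qed

lemma inj_coresolution_lift:
  fixes Alg :: "('k::field) alg"
  assumes A: "fd_algebra Alg"
    and CI: "inj_coresolution Alg l X I d \<epsilon>" and CJ: "inj_coresolution Alg l Y J e \<epsilon>'"
    and \<alpha>: "is_hom Alg X Y \<alpha>"
  shows "\<exists>\<phi>. (\<forall>k. is_hom Alg (I k) (J k) (\<phi> k)) \<and> \<phi> 0 * \<epsilon> = \<epsilon>' * \<alpha> \<and>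
    (\<forall>k. \<phi> (Suc k) * d k = e k * \<phi> k)"
proof -
  define P where "P k \<phi> \<longleftrightarrow> is_hom Alg (I k) (J k) \<phi> \<and>
    ker (d k) (fst (I k)) \<subseteq> ker (e k * \<phi>) (fst (I k)) \<and> (k = 0 \<longrightarrow> \<phi> * \<epsilon> = \<epsilon>' * \<alpha>)" for k \<phi>
  have "\<exists>\<phi>. \<forall>k. P k (\<phi> k) \<and> \<phi> (Suc k) * d k = e k * \<phi> k"
  proof (rule dependent_nat_choice)
    show "\<exists>\<phi>. P 0 \<phi>" using inj_coresolution_lift_base[OF A CI CJ \<alpha>] unfolding P_def by blast
    show "\<exists>\<psi>. P (Suc k) \<psi> \<and> \<psi> * d k = e k * \<phi>" if "P k \<phi>" for \<phi> k
      using inj_coresolution_lift_step[OF A CI CJ] that unfolding P_def by blast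
  qed
  then show ?thesis unfolding P_def by blast
qed

lemma min_inj_coresolution_endo_base:
  fixes Alg :: "('k::field) alg"
  assumes CI: "min_inj_coresolution Alg l X I d \<epsilon>"
    and T: "is_hom Alg (I 0) (I 0) T" and T\<epsilon>: "T * \<epsilon> = \<epsilon>"
  shows "ker T (fst (I 0)) = {0\<^sub>v (fst (I 0))} \<and>
    (\<forall>x \<in> carrier_vec (fst (I 0)). T *\<^sub>v x \<in> ker (d 0) (fst (I 0)) \<longrightarrow> x \<in> ker (d 0) (fst (I 0)))"
proof -
  have C: "inj_coresolution Alg l X I d \<epsilon>" and ess: "essential Alg (I 0) (ker (d 0) (fst (I 0)))"
    using CI unfolding min_inj_coresolution_def by auto
  note I = inj_coresolutionD[OF C]
  have Tc: "T \<in> carrier_mat (fst (I 0)) (fst (I 0))" using is_homD(1)[OF T] .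
  have T_id: "T *\<^sub>v x = x" if x: "x \<in> ker (d 0) (fst (I 0))" for x
  proof -
    obtain z where z: "z \<in> carrier_vec (fst X)" and xz: "x = \<epsilon> *\<^sub>v z"
      using x I(7) unfolding img_def by blast
    show ?thesis using T\<epsilon> Tc is_homD(1)[OF I(4)] z unfolding xz by (metis assoc_mult_mat_vec)
  qed
  have inj: "ker T (fst (I 0)) = {0\<^sub>v (fst (I 0))}"
    by (rule ker_trivial_of_essential[OF ess I(3) I(3) T]) (use T_id in simp)
  have "x \<in> ker (d 0) (fst (I 0))" if x: "x \<in> carrier_vec (fst (I 0))" and Tx: "T *\<^sub>v x \<in> ker (d 0) (fst (I 0))" for x
  proof -
    have "T *\<^sub>v (T *\<^sub>v x) = T *\<^sub>v x" using T_id Tx by simp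
    then have "T *\<^sub>v x = x" using ker_trivial_mult_vec_cancel[OF Tc inj] x Tc by simp
    then show ?thesis using Tx by simp
  qed
  then show ?thesis using inj by blast
qed

lemma min_inj_coresolution_endo_step:
  fixes Alg :: "('k::field) alg"
  assumes CI: "min_inj_coresolution Alg l X I d \<epsilon>"
    and T: "is_hom Alg (I k) (I k) T" and T': "is_hom Alg (I (Suc k)) (I (Suc k)) T'"
    and comm: "T' * d k = d k * T"
    and inj: "ker T (fst (I k)) = {0\<^sub>v (fst (I k))}"
    and reflect: "\<forall>x \<in> carrier_vec (fst (I k)). T *\<^sub>v x \<in> ker (d k) (fst (I k)) \<longrightarrow> x \<in> ker (d k) (fst (I k))"
  shows "ker T' (fst (I (Suc k))) = {0\<^sub>v (fst (I (Suc k)))} \<and>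
    (\<forall>x \<in> carrier_vec (fst (I (Suc k))). T' *\<^sub>v x \<in> ker (d (Suc k)) (fst (I (Suc k))) \<longrightarrow>
      x \<in> ker (d (Suc k)) (fst (I (Suc k))))"
proof -
  have C: "inj_coresolution Alg l X I d \<epsilon>" and ess: "essential Alg (I (Suc k)) (ker (d (Suc k)) (fst (I (Suc k))))"
    using CI unfolding min_inj_coresolution_def by auto
  note I = inj_coresolutionD[OF C]
  have Tc: "T \<in> carrier_mat (fst (I k)) (fst (I k))" and T'c: "T' \<in> carrier_mat (fst (I (Suc k))) (fst (I (Suc k)))"
    and dc: "d k \<in> carrier_mat (fst (I (Suc k))) (fst (I k))"
    using is_homD(1)[OF T] is_homD(1)[OF T'] is_homD(1)[OF I(5)] .
  have ker_d: "x \<in> ker (d k) (fst (I k)) \<longleftrightarrow> x \<in> carrier_vec (fst (I k)) \<and> d k *\<^sub>v x = 0\<^sub>v (fst (I (Suc k)))"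
    for x using dc unfolding ker_def by auto
  have T'd: "T' *\<^sub>v (d k *\<^sub>v x) = d k *\<^sub>v (T *\<^sub>v x)" if "x \<in> carrier_vec (fst (I k))" for x
    using comm Tc T'c dc that by (metis assoc_mult_mat_vec)
  have inj': "ker T' (fst (I (Suc k))) = {0\<^sub>v (fst (I (Suc k)))}"
  proof (rule ker_trivial_of_essential[OF ess I(3) I(3) T'])
    fix x assume x: "x \<in> ker (d (Suc k)) (fst (I (Suc k)))" and x0: "T' *\<^sub>v x = 0\<^sub>v (fst (I (Suc k)))"
    obtain y where y: "y \<in> carrier_vec (fst (I k))" and xy: "x = d k *\<^sub>v y"
      using x I(8)[of k] unfolding img_def by blast
    have "T *\<^sub>v y \<in> ker (d k) (fst (I k))" using x0 T'd[OF y] Tc y unfolding xy ker_d by simp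
    then show "x = 0\<^sub>v (fst (I (Suc k)))" using reflect y unfolding xy ker_d by simp
  qed
  have "x \<in> ker (d (Suc k)) (fst (I (Suc k)))"
    if x: "x \<in> carrier_vec (fst (I (Suc k)))" and T'x: "T' *\<^sub>v x \<in> ker (d (Suc k)) (fst (I (Suc k)))" for x
  proof -
    obtain z where z: "z \<in> carrier_vec (fst (I k))" and T'xz: "T' *\<^sub>v x = d k *\<^sub>v z"
      using T'x I(8)[of k] unfolding img_def by blast
    obtain z' where z': "z' \<in> carrier_vec (fst (I k))" and zz': "z = T *\<^sub>v z'"
      using ker_trivial_square_img[OF Tc inj] z unfolding img_def by auto
    have "T' *\<^sub>v x = T' *\<^sub>v (d k *\<^sub>v z')" using T'xz T'd[OF z'] zz' by simp
    from ker_trivial_mult_vec_cancel[OF T'c inj' x _ this] have "x = d k *\<^sub>v z'"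
      using z' dc by simp
    then show ?thesis using I(8)[of k] z' unfolding img_def by blast
  qed
  then show ?thesis using inj' by blast
qed

lemma min_inj_coresolution_endo_ker_trivial:
  fixes Alg :: "('k::field) alg"
  assumes CI: "min_inj_coresolution Alg l X I d \<epsilon>"
    and \<theta>: "\<And>k. is_hom Alg (I k) (I k) (\<theta> k)"
    and \<theta>0: "\<theta> 0 * \<epsilon> = \<epsilon>" and \<theta>S: "\<And>k. \<theta> (Suc k) * d k = d k * \<theta> k"
  shows "ker (\<theta> k) (fst (I k)) = {0\<^sub>v (fst (I k))}"
proof -
  have "ker (\<theta> k) (fst (I k)) = {0\<^sub>v (fst (I k))} \<and>
    (\<forall>x \<in> carrier_vec (fst (I k)). \<theta> k *\<^sub>v x \<in> ker (d k) (fst (I k)) \<longrightarrow> x \<in> ker (d k) (fst (I k)))"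
  proof (induction k)
    case 0
    show ?case using min_inj_coresolution_endo_base[OF CI \<theta> \<theta>0] .
  next
    case (Suc k)
    then show ?case using min_inj_coresolution_endo_step[OF CI \<theta> \<theta> \<theta>S] by blast
  qed
  then show ?thesis by blast
qed

lemma min_inj_coresolution_vanishes:
  fixes Alg :: "('k::field) alg"
  assumes A: "fd_algebra Alg"
    and CI: "min_inj_coresolution Alg l X I d \<epsilon>" and CJ: "inj_coresolution Alg l Y J e \<epsilon>'"
    and \<alpha>: "is_hom Alg X Y \<alpha>" and \<beta>: "is_hom Alg Y X \<beta>" and \<beta>\<alpha>: "\<beta> * \<alpha> = 1\<^sub>m (fst X)"
    and J0: "fst (J k) = 0"
  shows "fst (I k) = 0"
proof -
  have C: "inj_coresolution Alg l X I d \<epsilon>" using CI unfolding min_inj_coresolution_def by simp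
  note I = inj_coresolutionD[OF C] and J = inj_coresolutionD[OF CJ]
  obtain \<phi> where \<phi>: "\<And>k. is_hom Alg (I k) (J k) (\<phi> k)" and \<phi>0: "\<phi> 0 * \<epsilon> = \<epsilon>' * \<alpha>"
    and \<phi>S: "\<And>k. \<phi> (Suc k) * d k = e k * \<phi> k"
    using inj_coresolution_lift[OF A C CJ \<alpha>] by blast
  obtain \<psi> where \<psi>: "\<And>k. is_hom Alg (J k) (I k) (\<psi> k)" and \<psi>0: "\<psi> 0 * \<epsilon>' = \<epsilon> * \<beta>"
    and \<psi>S: "\<And>k. \<psi> (Suc k) * e k = d k * \<psi> k"
    using inj_coresolution_lift[OF A CJ C \<beta>] by blast
  have \<phi>c: "\<phi> k \<in> carrier_mat (fst (J k)) (fst (I k))" and \<psi>c: "\<psi> k \<in> carrier_mat (fst (I k)) (fst (J k))"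
    for k using is_homD(1)[OF \<phi>] is_homD(1)[OF \<psi>] .
  have dc: "d k \<in> carrier_mat (fst (I (Suc k))) (fst (I k))"
    and ec: "e k \<in> carrier_mat (fst (J (Suc k))) (fst (J k))" for k
    using is_homD(1)[OF I(5)] is_homD(1)[OF J(5)] .
  have \<epsilon>c: "\<epsilon> \<in> carrier_mat (fst (I 0)) (fst X)" and \<epsilon>'c: "\<epsilon>' \<in> carrier_mat (fst (J 0)) (fst Y)"
    and \<alpha>c: "\<alpha> \<in> carrier_mat (fst Y) (fst X)" and \<beta>c: "\<beta> \<in> carrier_mat (fst X) (fst Y)"
    using is_homD(1) I(4) J(4) \<alpha> \<beta> by blast+
  have "\<psi> 0 * \<phi> 0 * \<epsilon> = \<psi> 0 * (\<epsilon>' * \<alpha>)" using \<phi>0 \<phi>c[of 0] \<psi>c[of 0] \<epsilon>c by simp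
  also have "\<dots> = (\<epsilon> * \<beta>) * \<alpha>" using \<psi>0 \<psi>c[of 0] \<epsilon>'c \<alpha>c by (simp flip: assoc_mult_mat)
  also have "\<dots> = \<epsilon>" using \<beta>\<alpha> \<epsilon>c \<beta>c \<alpha>c by simp
  finally have \<theta>0: "\<psi> 0 * \<phi> 0 * \<epsilon> = \<epsilon>" .
  have \<theta>S: "\<psi> (Suc k) * \<phi> (Suc k) * d k = d k * (\<psi> k * \<phi> k)" for k
  proof -
    have "\<psi> (Suc k) * \<phi> (Suc k) * d k = \<psi> (Suc k) * (e k * \<phi> k)" using \<phi>S \<phi>c[of "Suc k"] \<psi>c[of "Suc k"] dc[of k] by simp
    also have "\<dots> = (d k * \<psi> k) * \<phi> k" using \<psi>S \<psi>c[of "Suc k"] ec[of k] \<phi>c[of k] by (simp flip: assoc_mult_mat)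
    also have "\<dots> = d k * (\<psi> k * \<phi> k)" using dc[of k] \<psi>c[of k] \<phi>c[of k] by simp
    finally show ?thesis .
  qed
  have \<theta>: "is_hom Alg (I k) (I k) (\<psi> k * \<phi> k)" for k using is_hom_mult[OF I(3) J(3) I(3) \<phi> \<psi>] .
  have inj: "ker (\<psi> k * \<phi> k) (fst (I k)) = {0\<^sub>v (fst (I k))}"
    using min_inj_coresolution_endo_ker_trivial[OF CI \<theta> \<theta>0 \<theta>S] .
  \<comment> \<open>The injective endomorphism \<open>\<psi> k * \<phi> k\<close> factors through \<open>J k\<close>, which is zero.\<close>
  have "x \<in> ker (\<psi> k * \<phi> k) (fst (I k))" if x: "x \<in> carrier_vec (fst (I k))" for x
    using \<phi>c[of k] \<psi>c[of k] x J0 unfolding ker_def by (auto intro!: eq_vecI simp: scalar_prod_def)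
  then show ?thesis using inj carrier_vec_trivial_imp_zero by blast
qed

lemma min_inj_coresolution_projective_vanishes:
  fixes Alg :: "('k::field) alg"
  assumes CI: "min_inj_coresolution Alg l X I d \<epsilon>"
    and P: "projective_mod Alg l (I (Suc k))" and I0: "fst (I (Suc (Suc k))) = 0"
  shows "fst (I (Suc k)) = 0"
proof -
  have C: "inj_coresolution Alg l X I d \<epsilon>" and ess: "essential Alg (I k) (ker (d k) (fst (I k)))"
    using CI unfolding min_inj_coresolution_def by auto
  note I = inj_coresolutionD[OF C]
  have dc: "d k \<in> carrier_mat (fst (I (Suc k))) (fst (I k))" using is_homD(1)[OF I(5)] .
  have "ker (d (Suc k)) (fst (I (Suc k))) = carrier_vec (fst (I (Suc k)))"
    using is_homD(1)[OF I(5)[of "Suc k"]] I0 unfolding ker_def by auto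
  then have "img (d k) (fst (I k)) = carrier_vec (fst (I (Suc k)))" using I(8)[of k] by simp
  then obtain s where s: "is_hom Alg (I (Suc k)) (I k) s" and ds: "d k * s = 1\<^sub>m (fst (I (Suc k)))"
    using projective_mod_split[OF P I(3) I(5)] by blast
  have sc: "s \<in> carrier_mat (fst (I k)) (fst (I (Suc k)))" using is_homD(1)[OF s] .
  have ds_vec: "d k *\<^sub>v (s *\<^sub>v y) = y" if "y \<in> carrier_vec (fst (I (Suc k)))" for y
    using ds dc sc that by (metis assoc_mult_mat_vec one_mult_mat_vec)
  have img_s: "img s (fst (I (Suc k))) = {0\<^sub>v (fst (I k))}"
  proof (rule essential_trivial_meet[OF ess submod_img[OF I(3) I(3) s]])
    show "ker (d k) (fst (I k)) \<inter> img s (fst (I (Suc k))) \<subseteq> {0\<^sub>v (fst (I k))}"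
      using ds_vec dc sc unfolding ker_def img_def by auto
  qed
  have "y = 0\<^sub>v (fst (I (Suc k)))" if y: "y \<in> carrier_vec (fst (I (Suc k)))" for y :: "'k vec"
  proof -
    have "s *\<^sub>v y = 0\<^sub>v (fst (I k))" using img_s y unfolding img_def by blast
    then show ?thesis using ds_vec[OF y] dc by auto
  qed
  then show ?thesis using carrier_vec_trivial_imp_zero by blast
qed

lemma min_inj_coresolution_projective_vanishes_from:
  fixes Alg :: "('k::field) alg"
  assumes CI: "min_inj_coresolution Alg l X I d \<epsilon>"
    and P: "\<And>k. projective_mod Alg l (I k)" and In: "fst (I (Suc n)) = 0"
  shows "fst (I 1) = 0"
  using In
proof (induction n)
  case (Suc n)
  then show ?case using min_inj_coresolution_projective_vanishes[OF CI P Suc.prems] by simp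
qed simp

lemma injective_mod_of_inj_coresolution:
  fixes Alg :: "('k::field) alg"
  assumes C: "inj_coresolution Alg l X I d \<epsilon>"
    and P: "projective_mod Alg l (I 0)" and I1: "fst (I 1) = 0"
  shows "injective_mod Alg l X"
proof -
  note I = inj_coresolutionD[OF C]
  have \<epsilon>c: "\<epsilon> \<in> carrier_mat (fst (I 0)) (fst X)" using is_homD(1)[OF I(4)] .
  have "ker (d 0) (fst (I 0)) = carrier_vec (fst (I 0))"
    using is_homD(1)[OF I(5)[of 0]] I1 unfolding ker_def by auto
  then have "img \<epsilon> (fst X) = carrier_vec (fst (I 0))" using I(7) by simp
  then obtain s where s: "is_hom Alg (I 0) X s" and \<epsilon>s: "\<epsilon> * s = 1\<^sub>m (fst (I 0))"
    using projective_mod_split[OF P I(1) I(4)] by blast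
  have sc: "s \<in> carrier_mat (fst X) (fst (I 0))" using is_homD(1)[OF s] .
  have "\<epsilon> * (s * \<epsilon>) = \<epsilon> * 1\<^sub>m (fst X)" using \<epsilon>s \<epsilon>c sc by (simp flip: assoc_mult_mat)
  then have "s * \<epsilon> = 1\<^sub>m (fst X)"
    using ker_trivial_mult_cancel[OF \<epsilon>c I(6) mult_carrier_mat[OF sc \<epsilon>c] one_carrier_mat] by simp
  then show ?thesis using injective_mod_retract[OF I(2) I(1) I(4) s] by blast
qed

lemma dominant_dim_infinite_projective:
  assumes "dominant_dim Alg I = \<infinity>"
  shows "projective_mod Alg False (I k)"
proof (rule ccontr)
  assume "\<not> projective_mod Alg False (I k)"
  then have "dominant_dim Alg I \<le> enat k" unfolding dominant_dim_def by (intro Inf_lower) auto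
  then show False using assms by simp
qed

lemma inj_dim_finiteE:
  assumes "inj_dim Alg l M < \<infinity>"
  obtains I d \<epsilon> n where "inj_coresolution Alg l M I d \<epsilon>" and "\<forall>i>n. fst (I i) = 0"
proof -
  let ?lengths = "{n. \<exists>I d \<epsilon>. inj_coresolution Alg l M I d \<epsilon> \<and> (\<forall>i>n. fst (I i) = 0)}"
  have "?lengths \<noteq> {}"
  proof
    assume "?lengths = {}"
    then have "inj_dim Alg l M = Inf (enat ` {})" unfolding inj_dim_def by (simp only:)
    then show False using assms by (simp add: top_enat_def)
  qed
  then show thesis using that by blast
qed

theorem mainTheorem2:
  fixes Alg :: "('k::field) alg"
    and R :: "'k amod" and I :: "nat \<Rightarrow> 'k amod" and d :: "nat \<Rightarrow> 'k mat" and \<epsilon> :: "'k mat"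
  assumes "fd_algebra Alg"
    and "regular_mod Alg False R"
    and "min_inj_coresolution Alg False R I d \<epsilon>"
    and "auslander_condition Alg I \<longrightarrow> iwanaga_gorenstein Alg"
    and "dominant_dim Alg I = \<infinity>"
  shows "selfinjective Alg"
proof -
  have proj: "projective_mod Alg False (I k)" for k
    using dominant_dim_infinite_projective[OF assms(5)] .
  then have "auslander_condition Alg I"
    unfolding auslander_condition_def n_gorenstein_def by (simp add: proj_dim_projective)
  then obtain R' where R': "regular_mod Alg False R'" and fin: "inj_dim Alg False R' < \<infinity>"
    using assms(4) unfolding iwanaga_gorenstein_def by blast
  obtain J e \<epsilon>' n where CJ: "inj_coresolution Alg False R' J e \<epsilon>'" and Jn: "\<forall>i>n. fst (J i) = 0"
    by (rule inj_dim_finiteE[OF fin])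
  obtain \<alpha> \<beta> where \<alpha>: "is_hom Alg R R' \<alpha>" and \<beta>: "is_hom Alg R' R \<beta>" and \<beta>\<alpha>: "\<beta> * \<alpha> = 1\<^sub>m (fst R)"
    using regular_mod_retraction[OF assms(1,2) R'] by blast
  have "fst (I (Suc n)) = 0"
    using min_inj_coresolution_vanishes[OF assms(1,3) CJ \<alpha> \<beta> \<beta>\<alpha>] Jn by simp
  then have "fst (I 1) = 0" by (rule min_inj_coresolution_projective_vanishes_from[OF assms(3) proj])
  moreover have "inj_coresolution Alg False R I d \<epsilon>"
    using assms(3) unfolding min_inj_coresolution_def by simp
  ultimately have "injective_mod Alg False R" using injective_mod_of_inj_coresolution proj by blast
  then show ?thesis using assms(2) unfolding selfinjective_def by blast
qed

end
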